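(* In the standing setup, if $g=B^{\rm T}f_0$ is associated to $f_0$ via $B=\alpha I+\beta A+\gamma A^2$ with $B^2=I$, then $\det(I-\varepsilon g'(x))=\det(I-\varepsilon f_0'(x))$ for all $x\in\mathbb R^6$ and all $\varepsilon\in\mathbb R$.
   Context: Standing setup: $J=\begin{pmatrix}0&I_3\\-I_3&0\end{pmatrix}$ ($6\times6$). $A$ is a fixed real $6\times 6$ skew-Hamiltonian matrix, i.e. $A^{\rm T}J=JA$. $H_0$ is a homogeneous cubic polynomial on $\mathbb R^6$ with $A\nabla^2H_0(x)=\nabla^2H_0(x)A^{\rm T}$ for all $x$ ($\nabla^2$ = Hesse matrix), and $H_1,H_2$ are homogeneous cubic polynomials with $\nabla H_1=A\nabla H_0$, $\nabla H_2=A\nabla H_1$. Set $f_i=J\nabla H_i$; primes denote Jacobi matrices. Associated vector field: if $B=\alpha I+\beta A+\gamma A^2$ satisfies $B^2=I$, then $g(x)=B^{\rm T}f_0(x)$ is called associated to $f_0$. *)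

theory Defs
  imports "HOL-Analysis.Analysis" "HOL-Library.Numeral_Type"
begin

text \<open>The symplectic matrix J = [[0, I3], [-I3, 0]] on R^6 (indices 0..5).\<close>
definition Jmat :: "real^6^6" where
  "Jmat = (\<chi> i j. if i < 3 \<and> j = i + 3 then 1
                 else if j < 3 \<and> i = j + 3 then -1 else 0)"

definition hom_cubic :: "(real^6 \<Rightarrow> real) \<Rightarrow> bool" where
  "hom_cubic H \<longleftrightarrow> (\<exists>c :: 6 \<Rightarrow> 6 \<Rightarrow> 6 \<Rightarrow> real.
      \<forall>x. H x = (\<Sum>i\<in>UNIV. \<Sum>j\<in>UNIV. \<Sum>k\<in>UNIV. c i j k * x$i * x$j * x$k))"

definition grad :: "(real^6 \<Rightarrow> real) \<Rightarrow> real^6 \<Rightarrow> real^6" where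
  "grad H x = (\<chi> i. frechet_derivative H (at x) (axis i 1))"

definition jacobi :: "(real^6 \<Rightarrow> real^6) \<Rightarrow> real^6 \<Rightarrow> real^6^6" where
  "jacobi f x = matrix (frechet_derivative f (at x))"

definition hesse :: "(real^6 \<Rightarrow> real) \<Rightarrow> real^6 \<Rightarrow> real^6^6" where
  "hesse H x = jacobi (grad H) x"

end

theory Submission
  imports Defs
begin

text \<open>
  Write \<open>f\<^sub>0' = J S\<close> with \<open>S\<close> the symmetric Hesse matrix of \<open>H\<^sub>0\<close>, and \<open>C = B\<^sup>T\<close>.
  The hypotheses make \<open>C\<close> an involution commuting with \<open>M = J S\<close> and compatible with \<open>J\<close>,
  so \<open>P = I + C\<close> and \<open>Q = I - C\<close> satisfy \<open>P Q = 0\<close> and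
  \<open>I - \<epsilon> M = (I - \<epsilon>/2 M P)(I - \<epsilon>/2 M Q)\<close>, \<open>I - \<epsilon> C M = (I - \<epsilon>/2 M P)(I + \<epsilon>/2 M Q)\<close>.
  Since \<open>M Q\<close> is Hamiltonian (\<open>(M Q)\<^sup>T = J M Q J\<close>), transposing and conjugating
  by \<open>J\<close> gives \<open>det (I - t M Q) = det (I + t M Q)\<close>, and the two determinants agree.
\<close>

lemma matrix_add_rdistrib: "((A::real^'n^'m) + B) ** (C::real^'p^'n) = A ** C + B ** C"
  by (simp add: matrix_matrix_mult_def vec_eq_iff sum.distrib algebra_simps)

lemma matrix_diff_ldistrib: "(A::real^'n^'m) ** (B - (C::real^'p^'n)) = A ** B - A ** C"
  by (simp add: matrix_matrix_mult_def vec_eq_iff sum_subtractf algebra_simps)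

lemma matrix_diff_rdistrib: "((A::real^'n^'m) - B) ** (C::real^'p^'n) = A ** C - B ** C"
  by (simp add: matrix_matrix_mult_def vec_eq_iff sum_subtractf algebra_simps)

lemma matrix_mul_uminus_left: "(- (A::real^'n^'m)) ** (B::real^'p^'n) = - (A ** B)"
  by (simp add: matrix_matrix_mult_def vec_eq_iff sum_negf)

lemma matrix_mul_uminus_right: "(A::real^'n^'m) ** (- (B::real^'p^'n)) = - (A ** B)"
  by (simp add: matrix_matrix_mult_def vec_eq_iff sum_negf)

lemma matrix_mul_scaleR_left: "(k *\<^sub>R (A::real^'n^'m)) ** (B::real^'p^'n) = k *\<^sub>R (A ** B)"
  by (simp add: scalar_matrix_assoc)

lemma matrix_mul_scaleR_right: "(A::real^'n^'m) ** (k *\<^sub>R (B::real^'p^'n)) = k *\<^sub>R (A ** B)"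
  by (simp add: matrix_scalar_ac scalar_matrix_assoc)

lemma matrix_mul_zero_right: "(A::real^'n^'m) ** (0::real^'p^'n) = 0"
  by (simp add: matrix_matrix_mult_def vec_eq_iff)

lemma transpose_add: "transpose ((A::real^'n^'m) + B) = transpose A + transpose B"
  by (simp add: transpose_def vec_eq_iff)

lemma transpose_diff: "transpose ((A::real^'n^'m) - B) = transpose A - transpose B"
  by (simp add: transpose_def vec_eq_iff)

lemma transpose_uminus: "transpose (- (A::real^'n^'m)) = - transpose A"
  by (simp add: transpose_def vec_eq_iff)

lemmas matrix_ring_simps = matrix_add_ldistrib matrix_add_rdistrib
  matrix_diff_ldistrib matrix_diff_rdistrib matrix_mul_uminus_left matrix_mul_uminus_right
  matrix_mul_scaleR_left matrix_mul_scaleR_right matrix_mul_assoc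
  transpose_add transpose_diff transpose_uminus transpose_scalar matrix_transpose_mul

lemma det_one_minus_eq_det_one_plus_Hamiltonian:
  fixes J N :: "real^'n^'n"
  assumes JJ: "J ** J = - mat 1" and N: "transpose N = J ** N ** J"
  shows "det (mat 1 - N) = det (mat 1 + N)"
proof -
  have det_J: "det (- J) * det J = 1"
    by (metis JJ det_I det_mul matrix_mul_uminus_left minus_minus)
  have "mat 1 - transpose N = - J ** (mat 1 + N) ** J"
    by (simp add: N JJ matrix_ring_simps)
  then have "det (mat 1 - transpose N) = det (mat 1 + N)"
    by (simp add: det_mul det_J)
  then show ?thesis
    by (metis det_transpose transpose_diff transpose_mat)
qed

lemma det_one_minus_commuting_involution:
  fixes J S C :: "real^'n^'n"
  assumes JJ: "J ** J = - mat 1" and JT: "transpose J = - J" and ST: "transpose S = S"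
    and CJ: "C ** J = J ** transpose C" and CS: "transpose C ** S = S ** C"
    and CC: "C ** C = mat 1"
  shows "det (mat 1 - e *\<^sub>R (C ** J ** S)) = det (mat 1 - e *\<^sub>R (J ** S))"
proof -
  define M where "M = J ** S"
  define P where "P = mat 1 + C"
  define Q where "Q = mat 1 - C"
  have MC: "M ** C = C ** M"
    unfolding M_def by (metis CJ CS matrix_mul_assoc)
  have MP: "M ** P = P ** M"
    unfolding P_def by (simp add: MC matrix_ring_simps)
  have PQ: "P ** Q = 0"
    unfolding P_def Q_def by (simp add: CC matrix_ring_simps)
  have MPMQ: "M ** P ** M ** Q = 0"
  proof -
    have "M ** P ** M ** Q = M ** M ** (P ** Q)"
      by (metis MP matrix_mul_assoc)
    then show ?thesis
      by (simp add: PQ matrix_mul_zero_right)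
  qed
  have factor: "mat 1 - (s *\<^sub>R (M ** P) + t *\<^sub>R (M ** Q))
      = (mat 1 - s *\<^sub>R (M ** P)) ** (mat 1 - t *\<^sub>R (M ** Q))" for s t
    by (simp add: matrix_ring_simps MPMQ algebra_simps)
  have Hamiltonian: "transpose (M ** Q) = J ** (M ** Q) ** J"
    unfolding M_def Q_def by (simp add: JJ JT ST CS matrix_ring_simps)
  have even: "det (mat 1 - t *\<^sub>R (M ** Q)) = det (mat 1 - (- t) *\<^sub>R (M ** Q))" for t
    using det_one_minus_eq_det_one_plus_Hamiltonian[OF JJ, of "t *\<^sub>R (M ** Q)"] Hamiltonian
    by (simp add: matrix_ring_simps)
  have CJS: "e *\<^sub>R (C ** J ** S) = (e/2) *\<^sub>R (M ** P) + (- (e/2)) *\<^sub>R (M ** Q)"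
    unfolding M_def P_def Q_def using MC[unfolded M_def]
    by (simp add: matrix_ring_simps algebra_simps scaleR_add_left[symmetric])
  have JS: "e *\<^sub>R (J ** S) = (e/2) *\<^sub>R (M ** P) + (e/2) *\<^sub>R (M ** Q)"
    unfolding M_def P_def Q_def
    by (simp add: matrix_ring_simps algebra_simps scaleR_add_left[symmetric])
  show ?thesis
    unfolding CJS JS factor det_mul even[of "e/2"] ..
qed

lemma transpose_quadratic_intertwines:
  fixes A X :: "real^'n^'n" and \<alpha> \<beta> \<gamma> :: real
  assumes AX: "transpose A ** X = X ** A"
  defines "B \<equiv> \<alpha> *\<^sub>R mat 1 + \<beta> *\<^sub>R A + \<gamma> *\<^sub>R (A ** A)"
  shows "transpose B ** X = X ** B"
proof -
  have "transpose A ** transpose A ** X = X ** A ** A"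
    by (metis AX matrix_mul_assoc)
  then show ?thesis
    unfolding B_def by (simp add: AX matrix_ring_simps)
qed

lemma exhaust_6:
  fixes x :: 6
  shows "x = 0 \<or> x = 1 \<or> x = 2 \<or> x = 3 \<or> x = 4 \<or> x = 5"
proof (induct x)
  case (of_int z)
  then have "z = 0 \<or> z = 1 \<or> z = 2 \<or> z = 3 \<or> z = 4 \<or> z = 5" by fastforce
  then show ?case by auto
qed

lemma less_3_6: "(0::6) < 3" "(1::6) < 3" "(2::6) < 3" "\<not> (3::6) < 3" "\<not> (4::6) < 3" "\<not> (5::6) < 3"
  by (simp_all add: less_bit0_def bit0.Rep_numeral bit0.Rep_0 bit0.Rep_1)

lemma UNIV_6: "(UNIV::6 set) = {0, 1, 2, 3, 4, 5}"
  using exhaust_6 by auto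

lemma sum_UNIV_6: "sum f (UNIV::6 set) = f 0 + f 1 + f 2 + f 3 + f 4 + f 5"
  unfolding UNIV_6 by (simp add: ac_simps)

lemma Jmat_mult_Jmat: "Jmat ** Jmat = - mat 1"
proof -
  have "(Jmat ** Jmat) $ i $ j = (- mat 1 :: real^6^6) $ i $ j" for i j
    using exhaust_6[of i] exhaust_6[of j]
    by (elim disjE) (simp_all add: matrix_matrix_mult_def Jmat_def mat_def sum_UNIV_6 less_3_6)
  then show ?thesis by (simp add: vec_eq_iff)
qed

lemma transpose_Jmat: "transpose Jmat = - Jmat"
proof -
  have "transpose Jmat $ i $ j = (- Jmat) $ i $ j" for i j
    using exhaust_6[of i] exhaust_6[of j]
    by (elim disjE) (simp_all add: transpose_def Jmat_def less_3_6)
  then show ?thesis by (simp add: vec_eq_iff)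
qed

definition cubic_form :: "('n::finite \<Rightarrow> 'n \<Rightarrow> 'n \<Rightarrow> real) \<Rightarrow> real^'n \<Rightarrow> real" where
  "cubic_form c x = (\<Sum>i\<in>UNIV. \<Sum>j\<in>UNIV. \<Sum>k\<in>UNIV. c i j k * x$i * x$j * x$k)"

definition cubic_form_deriv :: "('n::finite \<Rightarrow> 'n \<Rightarrow> 'n \<Rightarrow> real) \<Rightarrow> real^'n \<Rightarrow> real^'n \<Rightarrow> real" where
  "cubic_form_deriv c x h = (\<Sum>i\<in>UNIV. \<Sum>j\<in>UNIV. \<Sum>k\<in>UNIV.
     c i j k * (h$i * x$j * x$k + x$i * h$j * x$k + x$i * x$j * h$k))"

definition cubic_grad :: "('n::finite \<Rightarrow> 'n \<Rightarrow> 'n \<Rightarrow> real) \<Rightarrow> real^'n \<Rightarrow> real^'n" where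
  "cubic_grad c x = (\<chi> l. cubic_form_deriv c x (axis l 1))"

definition cubic_grad_deriv :: "('n::finite \<Rightarrow> 'n \<Rightarrow> 'n \<Rightarrow> real) \<Rightarrow> real^'n \<Rightarrow> real^'n \<Rightarrow> real^'n" where
  "cubic_grad_deriv c x h = (\<chi> l. \<Sum>i\<in>UNIV. \<Sum>j\<in>UNIV. \<Sum>k\<in>UNIV. c i j k *
     ((axis l 1::real^'n)$i * (h$j * x$k + x$j * h$k) + (axis l 1::real^'n)$j * (h$i * x$k + x$i * h$k)
      + (axis l 1::real^'n)$k * (h$i * x$j + x$i * h$j)))"

lemma hom_cubic_iff_cubic_form: "hom_cubic H \<longleftrightarrow> (\<exists>c. H = cubic_form c)"
  by (auto simp: hom_cubic_def cubic_form_def fun_eq_iff)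

lemma has_derivative_vec_nth: "((\<lambda>x::real^'n. x$i) has_derivative (\<lambda>h. h$i)) F"
  by (rule bounded_linear.has_derivative[OF bounded_linear_vec_nth has_derivative_ident])

lemma has_derivative_cubic_form: "(cubic_form c has_derivative cubic_form_deriv c x) (at x)"
  unfolding cubic_form_def[abs_def] cubic_form_deriv_def
  by (rule derivative_eq_intros has_derivative_vec_nth refl)+ (simp add: algebra_simps)

lemma has_derivative_cubic_grad: "(cubic_grad c has_derivative cubic_grad_deriv c x) (at x)"
proof -
  have "((\<lambda>y. cubic_grad c y $ l) has_derivative (\<lambda>h. cubic_grad_deriv c x h $ l)) (at x)" for l
    unfolding cubic_grad_def cubic_form_deriv_def cubic_grad_deriv_def vec_lambda_beta
    by (rule derivative_eq_intros has_derivative_vec_nth refl)+ (simp add: algebra_simps)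
  then show ?thesis
    by (subst has_derivative_componentwise_within) (auto simp: Basis_vec_def inner_axis)
qed

lemma grad_cubic_form: "grad (cubic_form c) = cubic_grad c"
  unfolding grad_def cubic_grad_def
  using frechet_derivative_at[OF has_derivative_cubic_form] by metis

lemma hesse_cubic_form: "hesse (cubic_form c) x = matrix (cubic_grad_deriv c x)"
  unfolding hesse_def jacobi_def grad_cubic_form
  using frechet_derivative_at[OF has_derivative_cubic_grad] by metis

lemma transpose_hesse_hom_cubic:
  assumes "hom_cubic H"
  shows "transpose (hesse H x) = hesse H x"
proof -
  obtain c where "H = cubic_form c"
    using assms hom_cubic_iff_cubic_form by blast
  moreover have "transpose (matrix (cubic_grad_deriv c x)) = matrix (cubic_grad_deriv c x)"
    unfolding transpose_def matrix_def vec_eq_iff cubic_grad_deriv_def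
    by (simp add: algebra_simps)
  ultimately show ?thesis
    by (simp add: hesse_cubic_form)
qed

lemma jacobi_matrix_vector_mult:
  assumes "F differentiable at x"
  shows "jacobi (\<lambda>y. K *v F y) x = K ** jacobi F x"
proof -
  obtain F' where F': "(F has_derivative F') (at x)"
    using assms differentiable_def by blast
  have "((\<lambda>y. K *v F y) has_derivative (\<lambda>h. K *v F' h)) (at x)"
    by (rule bounded_linear.has_derivative[OF matrix_vector_mul_bounded_linear F'])
  then have "jacobi (\<lambda>y. K *v F y) x = matrix ((\<lambda>h. K *v h) \<circ> F')"
    unfolding jacobi_def using frechet_derivative_at by (metis comp_apply)
  also have "\<dots> = K ** matrix F'"
    using matrix_compose[OF has_derivative_linear[OF F'] matrix_vector_mul_linear] by simp
  finally show ?thesis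
    unfolding jacobi_def using frechet_derivative_at[OF F'] by metis
qed

lemma jacobi_matrix_vector_mult_grad_hom_cubic:
  assumes "hom_cubic H"
  shows "jacobi (\<lambda>y. K *v grad H y) x = K ** hesse H x"
proof -
  obtain c where "H = cubic_form c"
    using assms hom_cubic_iff_cubic_form by blast
  then have "grad H differentiable at x"
    using differentiableI[OF has_derivative_cubic_grad] by (simp add: grad_cubic_form)
  then show ?thesis
    unfolding hesse_def by (rule jacobi_matrix_vector_mult)
qed

theorem mainTheorem5:
  fixes A B :: "real^6^6" and H0 H1 H2 :: "real^6 \<Rightarrow> real"
    and \<alpha> \<beta> \<gamma> :: real
  assumes skewHam: "transpose A ** Jmat = Jmat ** A"
    and H0_cubic: "hom_cubic H0"
    and H0_comm: "\<And>x. A ** hesse H0 x = hesse H0 x ** transpose A"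
    and H1_cubic: "hom_cubic H1"
    and H2_cubic: "hom_cubic H2"
    and H1_grad: "\<And>x. grad H1 x = A *v grad H0 x"
    and H2_grad: "\<And>x. grad H2 x = A *v grad H1 x"
    and B_def: "B = \<alpha> *\<^sub>R mat 1 + \<beta> *\<^sub>R A + \<gamma> *\<^sub>R (A ** A)"
    and B_inv: "B ** B = mat 1"
  shows "\<forall>x \<epsilon>. det (mat 1 - \<epsilon> *\<^sub>R jacobi (\<lambda>y. transpose B *v (Jmat *v grad H0 y)) x)
             = det (mat 1 - \<epsilon> *\<^sub>R jacobi (\<lambda>y. Jmat *v grad H0 y) x)"
proof (intro allI)
  fix x \<epsilon>
  let ?S = "hesse H0 x" and ?C = "transpose B"
  have CJ: "?C ** Jmat = Jmat ** transpose ?C"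
    using transpose_quadratic_intertwines[OF skewHam] by (simp add: B_def)
  have "transpose (transpose A) ** ?S = ?S ** transpose A"
    by (simp add: H0_comm)
  from transpose_quadratic_intertwines[OF this, of \<alpha> \<beta> \<gamma>]
  have CS: "transpose ?C ** ?S = ?S ** ?C"
    by (simp add: B_def matrix_ring_simps)
  have CC: "?C ** ?C = mat 1"
    by (metis B_inv matrix_transpose_mul transpose_mat)
  have "det (mat 1 - \<epsilon> *\<^sub>R jacobi (\<lambda>y. transpose B *v (Jmat *v grad H0 y)) x)
      = det (mat 1 - \<epsilon> *\<^sub>R (?C ** Jmat ** ?S))"
    using jacobi_matrix_vector_mult_grad_hom_cubic[OF H0_cubic, of "?C ** Jmat"]
    by (simp add: matrix_vector_mul_assoc)
  also have "\<dots> = det (mat 1 - \<epsilon> *\<^sub>R (Jmat ** ?S))"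
    by (rule det_one_minus_commuting_involution[OF Jmat_mult_Jmat transpose_Jmat
          transpose_hesse_hom_cubic[OF H0_cubic] CJ CS CC])
  also have "\<dots> = det (mat 1 - \<epsilon> *\<^sub>R jacobi (\<lambda>y. Jmat *v grad H0 y) x)"
    by (simp add: jacobi_matrix_vector_mult_grad_hom_cubic[OF H0_cubic])
  finally show "det (mat 1 - \<epsilon> *\<^sub>R jacobi (\<lambda>y. transpose B *v (Jmat *v grad H0 y)) x)
      = det (mat 1 - \<epsilon> *\<^sub>R jacobi (\<lambda>y. Jmat *v grad H0 y) x)" .
qed

end
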